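(* For every $\epsilon>0$ there exists $C_\epsilon>0$ such that $\big|W_{L,j}-\theta L^d\varphi^{*j}(0)\big|\le C_\epsilon L^{-2}$ for all real $L\ge1$ and all integers $1\le j\le L^{2-\epsilon}$.
   Context: Fix an integer $d\ge1$ and a real $\theta>0$. $X$ is a random vector in $\mathbb R^d$ with density $\varphi$, a Schwartz function, with $\mathbb E X=0$; $\varphi^{*j}$ is the $j$-fold convolution of $\varphi$. For $L>0$ and $j\ge1$, $W_{L,j}:=\theta L^d\sum_{k\in\mathbb Z^d}\varphi^{*j}(Lk)$. $C_\epsilon$ may depend on $d,\varphi,\theta,\epsilon$. *)

theory Defs
  imports "HOL-Analysis.Analysis"
begin

text \<open>Schwartz functions on R^d (d = CARD('n)): there is a family D of functions indexed by
  lists of coordinate directions (multi-indices of partial derivatives), with D [] = f,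
  each D beta Frechet differentiable everywhere with partial derivative in direction i equal to
  D (i # beta), and every (1 + |x|)^k * |D beta x| bounded.\<close>
definition schwartz :: "(real^'n \<Rightarrow> real) \<Rightarrow> bool" where
  "schwartz f \<longleftrightarrow> (\<exists>D :: 'n list \<Rightarrow> real^'n \<Rightarrow> real.
      D [] = f \<and>
      (\<forall>\<beta> x. (D \<beta> has_derivative (\<lambda>h. \<Sum>i\<in>UNIV. h $ i * D (i # \<beta>) x)) (at x)) \<and>
      (\<forall>\<beta> (k::nat). \<exists>B. \<forall>x. (1 + norm x) ^ k * \<bar>D \<beta> x\<bar> \<le> B))"

definition conv :: "(real^'n \<Rightarrow> real) \<Rightarrow> (real^'n \<Rightarrow> real) \<Rightarrow> real^'n \<Rightarrow> real" where
  "conv f g x = (\<integral>y. f y * g (x - y) \<partial>lborel)"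

text \<open>j-fold convolution power: conv_pow f j = f^{*j} for j \<ge> 1 (conv_pow f 0 = f is a dummy value).\<close>
fun conv_pow :: "(real^'n \<Rightarrow> real) \<Rightarrow> nat \<Rightarrow> real^'n \<Rightarrow> real" where
  "conv_pow f 0 = f"
| "conv_pow f (Suc 0) = f"
| "conv_pow f (Suc (Suc j)) = conv f (conv_pow f (Suc j))"

definition lattice_pt :: "('n \<Rightarrow> int) \<Rightarrow> real^'n" where
  "lattice_pt k = (\<chi> i. real_of_int (k i))"

definition W :: "real \<Rightarrow> (real^'n \<Rightarrow> real) \<Rightarrow> real \<Rightarrow> nat \<Rightarrow> real" where
  "W \<theta> \<phi> L j = \<theta> * L ^ CARD('n) * (\<Sum>\<^sub>\<infinity>k\<in>UNIV. conv_pow \<phi> j (L *\<^sub>R lattice_pt k))"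

end

theory Submission
  imports Defs "HOL-Probability.Sinc_Integral"
begin

text \<open>Write \<open>p_j\<close> for the \<open>j\<close>-fold convolution power of \<open>\<phi>\<close>. The error term is
  \<open>\<theta> L^d \<Sum>_{k \<noteq> 0} p_j(L k)\<close>, so it suffices that \<open>|x|^{2m} p_j(x) = O(j^m)\<close> for every \<open>m\<close>.
  Since \<open>\<phi>\<close> has mean zero, convolving with \<open>\<phi>\<close> raises the moment \<open>\<integral> (1 + |x|^2)^m p_j\<close> only by a
  multiple of the moment of order \<open>m - 1\<close>: the part of \<open>(1 + |z + y|^2)^m\<close> that is linear in \<open>y\<close>
  integrates to zero against \<open>\<phi>(y)\<close>. So these moments are \<open>O(j^m)\<close>, and as one of \<open>|y|\<close>, \<open>|x - y|\<close>
  is at least \<open>|x|/2\<close> in \<open>(\<phi> \<star> p_j)(x)\<close>, they give the pointwise bound. Summing over the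
  lattice with \<open>\<epsilon> m \<ge> d + 2\<close> yields \<open>\<theta> L^d j^m L^{-2m} \<le> C L^{-2}\<close> whenever \<open>j \<le> L^{2-\<epsilon>}\<close>.\<close>

section \<open>The weight \<open>\<langle>x\<rangle>^2 = 1 + |x|^2\<close>\<close>

definition bracket :: "'a::real_normed_vector \<Rightarrow> real" where
  "bracket x = 1 + norm x ^ 2"

lemma bracket_ge_1: "1 \<le> bracket x"
  by (simp add: bracket_def)

lemma bracket_pos: "0 < bracket x"
  using bracket_ge_1 less_le_trans zero_less_one by blast

lemma bracket_nonneg: "0 \<le> bracket x"
  using bracket_pos less_imp_le by blast

lemma borel_measurable_bracket [measurable]: "bracket \<in> borel_measurable borel"
  unfolding bracket_def by measurable

lemma norm_le_bracket: "norm x \<le> bracket x"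
proof -
  have "2 * norm x \<le> 1 + norm x ^ 2"
    using sum_squares_bound[of 1 "norm x"] by (simp add: power2_eq_square)
  then show ?thesis
    unfolding bracket_def using norm_ge_zero[of x] by linarith
qed

lemma bracket_add:
  fixes z y :: "'a::real_inner"
  shows "bracket (z + y) = bracket z + (2 * (z \<bullet> y) + norm y ^ 2)"
  by (simp add: bracket_def power2_norm_eq_inner inner_add_left inner_add_right inner_commute
      algebra_simps)

lemma bracket_add_le:
  fixes z y :: "'a::real_normed_vector"
  shows "bracket (z + y) \<le> 2 * bracket z * bracket y"
proof -
  have "norm (z + y) ^ 2 \<le> (norm z + norm y) ^ 2"
    by (intro power_mono norm_triangle_ineq) auto
  also have "\<dots> \<le> 2 * norm z ^ 2 + 2 * norm y ^ 2"
    using sum_squares_bound[of "norm z" "norm y"] by (simp add: power2_eq_square algebra_simps)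
  finally have "norm (z + y) ^ 2 \<le> 2 * norm z ^ 2 + 2 * norm y ^ 2" .
  moreover have "2 * bracket z * bracket y = 2 + 2 * norm z ^ 2 + 2 * norm y ^ 2 + 2 * (norm z * norm y) ^ 2"
    by (simp add: bracket_def algebra_simps power_mult_distrib)
  ultimately show ?thesis
    unfolding bracket_def using zero_le_power2[of "norm z * norm y"] by linarith
qed

lemma power_le_bracket_power:
  assumes "r / 2 \<le> norm v" "0 \<le> r"
  shows "r ^ (2 * m) \<le> 4 ^ m * bracket v ^ m"
proof -
  have "(r / 2) ^ 2 \<le> norm v ^ 2"
    using assms by (intro power_mono) auto
  then have "(r / 2) ^ 2 \<le> bracket v"
    by (simp add: bracket_def)
  then have "((r / 2) ^ 2) ^ m \<le> bracket v ^ m"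
    by (intro power_mono) auto
  moreover have "((r / 2) ^ 2) ^ m = r ^ (2 * m) / 4 ^ m"
    by (simp add: power_divide power_mult)
  ultimately show ?thesis
    by (simp add: field_simps)
qed

lemma power_Suc_add_remainder_le:
  fixes A a u b :: real
  assumes A: "1 \<le> A" and a: "1 \<le> a" and u2: "u\<^sup>2 \<le> A * b\<^sup>2" and u1: "\<bar>u\<bar> \<le> A * b"
    and b: "1 \<le> b"
  shows "real (Suc n) * (a * u\<^sup>2) + 3 ^ Suc n * ((A * a) * b ^ Suc n) + 3 ^ Suc n * (a * (u * b ^ Suc n))
    \<le> 3 ^ Suc (Suc n) * ((A * a) * b ^ Suc (Suc n))"
proof -
  define B where "B = (A * a) * b ^ Suc (Suc n)"
  have bb: "b ^ Suc n \<le> b ^ Suc (Suc n)" "b\<^sup>2 \<le> b ^ Suc (Suc n)"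
    using b power_increasing[of 2 "Suc (Suc n)" b] by (auto intro: power_increasing)
  have "u\<^sup>2 \<le> A * b ^ Suc (Suc n)"
    using u2 mult_left_mono[OF bb(2), of A] A by linarith
  then have "a * u\<^sup>2 \<le> B"
    using mult_left_mono[of "u\<^sup>2" "A * b ^ Suc (Suc n)" a] a by (simp add: B_def mult_ac)
  then have t1: "real (Suc n) * (a * u\<^sup>2) \<le> real (Suc n) * B"
    by (rule mult_left_mono) simp
  have "(A * a) * b ^ Suc n \<le> B"
    using mult_left_mono[OF bb(1), of "A * a"] a A by (simp add: B_def)
  then have t2: "3 ^ Suc n * ((A * a) * b ^ Suc n) \<le> 3 ^ Suc n * B"
    by (rule mult_left_mono) simp
  have "u * b ^ Suc n \<le> (A * b) * b ^ Suc n"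
    using u1 b by (intro mult_right_mono) auto
  then have "a * (u * b ^ Suc n) \<le> B"
    using mult_left_mono[of "u * b ^ Suc n" "(A * b) * b ^ Suc n" a] a by (simp add: B_def mult_ac)
  then have t3: "3 ^ Suc n * (a * (u * b ^ Suc n)) \<le> 3 ^ Suc n * B"
    by (rule mult_left_mono) simp
  have "real (Suc n) < 2 ^ Suc n"
    using less_exp[of "Suc n"] by (metis of_nat_less_iff of_nat_numeral of_nat_power)
  also have "(2::real) ^ Suc n \<le> 3 ^ Suc n"
    by (rule power_mono) auto
  finally have "real (Suc n) + 3 ^ Suc n + 3 ^ Suc n \<le> 3 ^ Suc (Suc n)"
    by simp
  moreover have "0 \<le> B"
    using a A b by (simp add: B_def)
  ultimately have "(real (Suc n) + 3 ^ Suc n + 3 ^ Suc n) * B \<le> 3 ^ Suc (Suc n) * B"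
    by (rule mult_right_mono)
  then have "real (Suc n) * B + 3 ^ Suc n * B + 3 ^ Suc n * B \<le> 3 ^ Suc (Suc n) * B"
    by (simp add: algebra_simps)
  then show ?thesis
    using t1 t2 t3 unfolding B_def by linarith
qed

lemma power_Suc_add_le:
  fixes A u b :: real
  assumes A: "1 \<le> A" and Au: "0 \<le> A + u" and u2: "u\<^sup>2 \<le> A * b\<^sup>2" and u1: "\<bar>u\<bar> \<le> A * b"
    and b: "1 \<le> b"
  shows "(A + u) ^ Suc n \<le> A ^ Suc n + real (Suc n) * A ^ n * u + 3 ^ Suc n * A ^ n * b ^ Suc n"
proof (induction n)
  case 0
  then show ?case using b by simp
next
  case (Suc n)
  define a where "a = A ^ n"
  have "(A + u) ^ Suc (Suc n) \<le> (A + u) * (A * a + real (Suc n) * a * u + 3 ^ Suc n * a * b ^ Suc n)"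
    using mult_left_mono[OF Suc Au] by (simp add: a_def)
  also have "\<dots> = A * (A * a) + real (Suc (Suc n)) * (A * a) * u + (real (Suc n) * (a * u\<^sup>2)
      + 3 ^ Suc n * ((A * a) * b ^ Suc n) + 3 ^ Suc n * (a * (u * b ^ Suc n)))"
    by (simp add: algebra_simps power2_eq_square)
  also have "\<dots> \<le> A * (A * a) + real (Suc (Suc n)) * (A * a) * u + 3 ^ Suc (Suc n) * ((A * a) * b ^ Suc (Suc n))"
    using power_Suc_add_remainder_le[OF A _ u2 u1 b, of a n] A by (simp add: a_def one_le_power)
  finally show ?case
    by (simp add: a_def mult_ac)
qed

lemma power_Suc_plus_one_le:
  fixes a c E :: real
  assumes "1 \<le> a" "0 \<le> c" "c \<le> E"
  shows "E * a ^ Suc n + c * a ^ n \<le> E * (a + 1) ^ Suc n"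
proof -
  have "a ^ n \<le> (a + 1) ^ n"
    using assms by (intro power_mono) auto
  then have "E * a * a ^ n + c * a ^ n \<le> E * a * (a + 1) ^ n + E * (a + 1) ^ n"
    using assms by (intro add_mono mult_left_mono mult_mono) auto
  then have "E * a ^ Suc n + c * a ^ n \<le> E * a * (a + 1) ^ n + E * (a + 1) ^ n"
    by (simp add: mult_ac)
  also have "\<dots> = E * (a + 1) ^ Suc n"
    by (simp add: algebra_simps)
  finally show ?thesis .
qed

lemma cross_term_le:
  fixes p q :: real
  assumes "0 \<le> p" "0 \<le> q"
  shows "2 * p * q + q\<^sup>2 \<le> (1 + p\<^sup>2) * (4 * (1 + q\<^sup>2))"
    and "(2 * p * q + q\<^sup>2)\<^sup>2 \<le> (1 + p\<^sup>2) * (4 * (1 + q\<^sup>2))\<^sup>2"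
proof -
  have pq: "2 * p * q \<le> p\<^sup>2 + q\<^sup>2"
    using sum_squares_bound[of p q] by (simp add: power2_eq_square)
  have nonneg: "0 \<le> p\<^sup>2 * q\<^sup>2" "0 \<le> p\<^sup>2 * q ^ 4" "0 \<le> q ^ 4"
    by auto
  have "(1 + p\<^sup>2) * (4 * (1 + q\<^sup>2)) = 4 + 4 * q\<^sup>2 + 4 * p\<^sup>2 + 4 * (p\<^sup>2 * q\<^sup>2)"
    by (simp add: algebra_simps)
  then show "2 * p * q + q\<^sup>2 \<le> (1 + p\<^sup>2) * (4 * (1 + q\<^sup>2))"
    using pq nonneg zero_le_power2[of p] zero_le_power2[of q] by linarith
  have "(2 * p * q + q\<^sup>2)\<^sup>2 \<le> 2 * (2 * p * q)\<^sup>2 + 2 * (q\<^sup>2)\<^sup>2"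
    using sum_squares_bound[of "2 * p * q" "q\<^sup>2"] by (simp add: power2_eq_square algebra_simps)
  also have "\<dots> = 8 * (p\<^sup>2 * q\<^sup>2) + 2 * q ^ 4"
    by (simp add: power2_eq_square power4_eq_xxxx algebra_simps)
  also have "\<dots> \<le> (1 + p\<^sup>2) * (4 * (1 + q\<^sup>2))\<^sup>2"
  proof -
    have "(1 + p\<^sup>2) * (4 * (1 + q\<^sup>2))\<^sup>2
        = 16 + 32 * q\<^sup>2 + 16 * q ^ 4 + 16 * p\<^sup>2 + 32 * (p\<^sup>2 * q\<^sup>2) + 16 * (p\<^sup>2 * q ^ 4)"
      by (simp add: power2_eq_square power4_eq_xxxx algebra_simps)
    then show ?thesis
      using nonneg zero_le_power2[of p] zero_le_power2[of q] by linarith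
  qed
  finally show "(2 * p * q + q\<^sup>2)\<^sup>2 \<le> (1 + p\<^sup>2) * (4 * (1 + q\<^sup>2))\<^sup>2" .
qed

lemma bracket_add_power_le:
  fixes z y :: "'a::real_inner"
  shows "bracket (z + y) ^ Suc n \<le> bracket z ^ Suc n + (2 * real (Suc n) * bracket z ^ n) * (z \<bullet> y)
     + ((real (Suc n) + 3 ^ Suc n) * 4 ^ Suc n * bracket z ^ n) * bracket y ^ Suc n"
proof -
  define A where "A = bracket z"
  define u where "u = 2 * (z \<bullet> y) + norm y ^ 2"
  define b where "b = 4 * bracket y"
  have A: "1 \<le> A" "A + u = bracket (z + y)"
    by (simp_all add: A_def u_def bracket_ge_1 bracket_add)
  have b: "1 \<le> b"
    using bracket_ge_1[of y] by (simp add: b_def)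
  have u: "\<bar>u\<bar> \<le> 2 * norm z * norm y + norm y ^ 2"
    using Cauchy_Schwarz_ineq2[of z y] zero_le_power2[of "norm y"] unfolding u_def abs_le_iff
    by linarith
  have u1: "\<bar>u\<bar> \<le> A * b"
    using u cross_term_le(1)[of "norm z" "norm y"] by (simp add: A_def b_def bracket_def)
  have "u\<^sup>2 \<le> (2 * norm z * norm y + norm y ^ 2)\<^sup>2"
    using u power_mono[of "\<bar>u\<bar>" _ 2] by simp
  then have u2: "u\<^sup>2 \<le> A * b\<^sup>2"
    using cross_term_le(2)[of "norm z" "norm y"] by (simp add: A_def b_def bracket_def)
  have "bracket (z + y) ^ Suc n \<le> A ^ Suc n + real (Suc n) * A ^ n * u + 3 ^ Suc n * A ^ n * b ^ Suc n"
    using power_Suc_add_le[OF A(1) _ u2 u1 b] A(2) bracket_pos[of "z + y"] by simp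
  moreover have "real (Suc n) * A ^ n * norm y ^ 2 \<le> real (Suc n) * A ^ n * (4 ^ Suc n * bracket y ^ Suc n)"
  proof -
    have "norm y ^ 2 \<le> bracket y ^ Suc n"
      using bracket_ge_1[of y] power_increasing[of 1 "Suc n" "bracket y"] by (simp add: bracket_def)
    also have "\<dots> \<le> 4 ^ Suc n * bracket y ^ Suc n"
      using bracket_ge_1[of y] one_le_power[of "4::real" "Suc n"] by simp
    finally show ?thesis
      using A(1) by (intro mult_left_mono) auto
  qed
  ultimately show ?thesis
    by (simp add: A_def u_def b_def power_mult_distrib algebra_simps)
qed

section \<open>Lebesgue integrals and convolution\<close>

lemma inverse_bracket_power_DIM_le:
  fixes y :: "'a::euclidean_space"
  shows "1 / bracket y ^ DIM('a) \<le> (\<Prod>b\<in>Basis. inverse (1 + (y \<bullet> b)\<^sup>2))"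
proof -
  have "(\<Prod>b\<in>(Basis::'a set). 1 + (y \<bullet> b)\<^sup>2) \<le> (\<Prod>b\<in>(Basis::'a set). bracket y)"
  proof (intro prod_mono conjI)
    fix b :: 'a
    assume "b \<in> Basis"
    then have "(y \<bullet> b)\<^sup>2 \<le> (norm y)\<^sup>2"
      by (metis Basis_le_norm abs_ge_zero power2_abs power_mono)
    then show "1 + (y \<bullet> b)\<^sup>2 \<le> bracket y"
      by (simp add: bracket_def)
  qed (auto simp: add_nonneg_nonneg)
  moreover have "0 < (\<Prod>b\<in>(Basis::'a set). 1 + (y \<bullet> b)\<^sup>2)"
    by (intro prod_pos) (auto simp: add_pos_nonneg)
  ultimately have "1 / bracket y ^ DIM('a) \<le> inverse (\<Prod>b\<in>(Basis::'a set). 1 + (y \<bullet> b)\<^sup>2)"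
    using bracket_pos[of y] by (simp add: divide_simps)
  also have "\<dots> = (\<Prod>b\<in>(Basis::'a set). inverse (1 + (y \<bullet> b)\<^sup>2))"
    using prod_inversef[of "\<lambda>b. 1 + (y \<bullet> b)\<^sup>2" Basis] by (simp add: o_def)
  finally show ?thesis .
qed

text \<open>The bound by a product of one-dimensional Cauchy densities reduces integrability to
  \<open>integrable_inverse_1_plus_square\<close>.\<close>
lemma integrable_inverse_bracket_power_DIM:
  "integrable lborel (\<lambda>y::'a::euclidean_space. 1 / bracket y ^ DIM('a))"
proof (rule integrableI_bounded)
  show "(\<lambda>y::'a. 1 / bracket y ^ DIM('a)) \<in> borel_measurable lborel"
    by measurable
  have le: "ennreal (norm (1 / bracket y ^ DIM('a)))
      \<le> (\<Prod>b\<in>Basis. ennreal (inverse (1 + (y \<bullet> b)\<^sup>2)))" for y :: 'a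
  proof -
    have "ennreal (1 / bracket y ^ DIM('a)) \<le> ennreal (\<Prod>b\<in>(Basis::'a set). inverse (1 + (y \<bullet> b)\<^sup>2))"
      by (rule ennreal_leI[OF inverse_bracket_power_DIM_le])
    also have "\<dots> = (\<Prod>b\<in>Basis. ennreal (inverse (1 + (y \<bullet> b)\<^sup>2)))"
      by (rule prod_ennreal[symmetric]) (auto simp: add_nonneg_nonneg)
    finally show ?thesis
      using bracket_pos[of y] by simp
  qed
  have "integrable lborel (\<lambda>t::real. inverse (1 + t\<^sup>2))"
    using integrable_inverse_1_plus_square unfolding set_integrable_def by (simp add: einterval_def)
  then have finite: "(\<integral>\<^sup>+ t. ennreal (inverse (1 + t\<^sup>2)) \<partial>lborel) < \<infinity>"
    using integrableD(2) by (simp add: less_top)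
  have "(\<integral>\<^sup>+ y. ennreal (norm (1 / bracket y ^ DIM('a))) \<partial>(lborel::'a measure))
      \<le> (\<integral>\<^sup>+ y. (\<Prod>b\<in>Basis. ennreal (inverse (1 + (y \<bullet> b)\<^sup>2))) \<partial>(lborel::'a measure))"
    by (intro nn_integral_mono le)
  also have "\<dots> = (\<Prod>b\<in>(Basis::'a set). (\<integral>\<^sup>+ t. ennreal (inverse (1 + t\<^sup>2)) \<partial>lborel))"
    by (rule nn_integral_lborel_prod) auto
  also have "\<dots> < \<infinity>"
    using finite by (simp add: power_less_top_ennreal)
  finally show "(\<integral>\<^sup>+ y. ennreal (norm (1 / bracket y ^ DIM('a))) \<partial>(lborel::'a measure)) < \<infinity>" .
qed

lemma nn_integral_lborel_shift:
  fixes g :: "'a::euclidean_space \<Rightarrow> ennreal"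
  assumes [measurable]: "g \<in> borel_measurable borel"
  shows "(\<integral>\<^sup>+x. g (x - y) \<partial>lborel) = integral\<^sup>N lborel g"
proof -
  have "(\<integral>\<^sup>+x. g (x - y) \<partial>lborel) = (\<integral>\<^sup>+x. g (x - y) \<partial>distr lborel borel ((+) y))"
    by (simp add: lborel_distr_plus)
  also have "\<dots> = (\<integral>\<^sup>+x. g (y + x - y) \<partial>lborel)"
    by (subst nn_integral_distr) auto
  finally show ?thesis
    by simp
qed

lemma nn_integral_lborel_reflect:
  fixes g :: "'a::euclidean_space \<Rightarrow> ennreal"
  assumes [measurable]: "g \<in> borel_measurable borel"
  shows "(\<integral>\<^sup>+x. g (y - x) \<partial>lborel) = integral\<^sup>N lborel g"
proof -
  have "lborel = distr lborel borel ((-) y)"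
    using lborel_affine[of "-1" y] by (simp add: density_1)
  then have "(\<integral>\<^sup>+x. g (y - x) \<partial>lborel) = (\<integral>\<^sup>+x. g (y - x) \<partial>distr lborel borel ((-) y))"
    by simp
  also have "\<dots> = (\<integral>\<^sup>+x. g (y - (y - x)) \<partial>lborel)"
    by (subst nn_integral_distr) auto
  finally show ?thesis
    by simp
qed

lemma borel_measurable_conv [measurable]:
  fixes f g :: "real^'n \<Rightarrow> real"
  assumes [measurable]: "f \<in> borel_measurable borel" "g \<in> borel_measurable borel"
  shows "conv f g \<in> borel_measurable borel"
  unfolding conv_def[abs_def] by measurable

lemma ennreal_conv:
  fixes f g :: "real^'n \<Rightarrow> real"
  assumes "integrable lborel (\<lambda>y. f y * g (x - y))" "\<And>y. 0 \<le> f y" "\<And>y. 0 \<le> g y"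
  shows "ennreal (conv f g x) = (\<integral>\<^sup>+y. ennreal (f y * g (x - y)) \<partial>lborel)"
  unfolding conv_def using assms by (subst nn_integral_eq_integral) auto

lemma integrable_mult_shift_bounded:
  fixes f g :: "'a::euclidean_space \<Rightarrow> real"
  assumes f: "integrable lborel f" and [measurable]: "g \<in> borel_measurable borel"
    and g: "\<And>x. \<bar>g x\<bar> \<le> M"
  shows "integrable lborel (\<lambda>y. f y * g (x - y))"
proof (rule Bochner_Integration.integrable_bound)
  have [measurable]: "f \<in> borel_measurable borel"
    using borel_measurable_integrable[OF f] by simp
  show "integrable lborel (\<lambda>y. M * norm (f y))"
    using f by (intro integrable_mult_right integrable_norm)
  show "(\<lambda>y. f y * g (x - y)) \<in> borel_measurable lborel"
    by measurable
  show "AE y in lborel. norm (f y * g (x - y)) \<le> norm (M * norm (f y))"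
    using g order_trans[OF abs_ge_zero g]
    by (intro AE_I2) (simp add: abs_mult mult.commute[of M] mult_left_mono)
qed

lemma ennreal_mult_conv:
  fixes f g :: "real^'n \<Rightarrow> real"
  assumes [measurable]: "f \<in> borel_measurable borel" "g \<in> borel_measurable borel"
    and nonneg: "\<And>y. 0 \<le> f y" "\<And>y. 0 \<le> g y" "0 \<le> c"
    and int: "integrable lborel (\<lambda>y. f y * g (x - y))"
  shows "ennreal (c * conv f g x) = (\<integral>\<^sup>+y. ennreal (c * (f y * g (x - y))) \<partial>lborel)"
proof -
  have "0 \<le> conv f g x"
    unfolding conv_def using nonneg by (intro integral_nonneg_AE) auto
  then have "ennreal (c * conv f g x) = ennreal c * ennreal (conv f g x)"
    using nonneg by (simp add: ennreal_mult)
  also have "\<dots> = ennreal c * (\<integral>\<^sup>+y. ennreal (f y * g (x - y)) \<partial>lborel)"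
    by (simp only: ennreal_conv[OF int nonneg(1,2)])
  also have "\<dots> = (\<integral>\<^sup>+y. ennreal c * ennreal (f y * g (x - y)) \<partial>lborel)"
    by (rule nn_integral_cmult[symmetric]) measurable
  finally show ?thesis
    using nonneg by (simp add: ennreal_mult)
qed

lemma nn_integral_mult_conv:
  fixes f g h :: "real^'n \<Rightarrow> real"
  assumes [measurable]: "f \<in> borel_measurable borel" "g \<in> borel_measurable borel"
      "h \<in> borel_measurable borel"
    and nonneg: "\<And>y. 0 \<le> f y" "\<And>y. 0 \<le> g y" "\<And>y. 0 \<le> h y"
    and int: "\<And>x. integrable lborel (\<lambda>y. f y * g (x - y))"
  shows "(\<integral>\<^sup>+x. ennreal (h x * conv f g x) \<partial>lborel)
    = (\<integral>\<^sup>+z. ennreal (g z) * (\<integral>\<^sup>+y. ennreal (f y * h (z + y)) \<partial>lborel) \<partial>lborel)"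
proof -
  have "ennreal (h x * conv f g x) = (\<integral>\<^sup>+y. ennreal (h x * (f y * g (x - y))) \<partial>lborel)" for x
    using nonneg int by (intro ennreal_mult_conv) auto
  then have "(\<integral>\<^sup>+x. ennreal (h x * conv f g x) \<partial>lborel)
      = (\<integral>\<^sup>+x. \<integral>\<^sup>+y. ennreal (h x * (f y * g (x - y))) \<partial>lborel \<partial>lborel)"
    by simp
  also have "\<dots> = (\<integral>\<^sup>+y. \<integral>\<^sup>+x. ennreal (h x * (f y * g (x - y))) \<partial>lborel \<partial>lborel)"
    by (rule lborel_pair.Fubini'[symmetric]) measurable
  also have "\<dots> = (\<integral>\<^sup>+y. \<integral>\<^sup>+z. ennreal (h (z + y) * (f y * g z)) \<partial>lborel \<partial>lborel)"
  proof (rule nn_integral_cong)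
    fix y :: "real^'n"
    show "(\<integral>\<^sup>+x. ennreal (h x * (f y * g (x - y))) \<partial>lborel)
        = (\<integral>\<^sup>+z. ennreal (h (z + y) * (f y * g z)) \<partial>lborel)"
      using nn_integral_lborel_shift[of "\<lambda>z. ennreal (h (z + y) * (f y * g z))" y] by simp
  qed
  also have "\<dots> = (\<integral>\<^sup>+z. \<integral>\<^sup>+y. ennreal (h (z + y) * (f y * g z)) \<partial>lborel \<partial>lborel)"
    by (rule lborel_pair.Fubini') measurable
  also have "\<dots> = (\<integral>\<^sup>+z. \<integral>\<^sup>+y. ennreal (g z) * ennreal (f y * h (z + y)) \<partial>lborel \<partial>lborel)"
    using nonneg by (simp add: ennreal_mult[symmetric] mult_ac)
  also have "\<dots> = (\<integral>\<^sup>+z. ennreal (g z) * (\<integral>\<^sup>+y. ennreal (f y * h (z + y)) \<partial>lborel) \<partial>lborel)"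
    by (simp add: nn_integral_cmult)
  finally show ?thesis .
qed

section \<open>Convolution powers of a centered density\<close>

locale centered_density =
  fixes \<phi> :: "real^'n \<Rightarrow> real"
  assumes borel_measurable_phi [measurable]: "\<phi> \<in> borel_measurable borel"
    and phi_nonneg: "0 \<le> \<phi> x"
    and rapid_decay: "\<exists>B. \<forall>x. bracket x ^ k * \<phi> x \<le> B"
    and integral_phi: "integral\<^sup>L lborel \<phi> = 1"
    and mean_zero: "(\<integral>x. \<phi> x *\<^sub>R x \<partial>lborel) = 0"
begin

lemma integrable_bracket_power_phi: "integrable lborel (\<lambda>x. bracket x ^ k * \<phi> x)"
proof -
  obtain B where B: "\<And>x. bracket x ^ (k + CARD('n)) * \<phi> x \<le> B"
    using rapid_decay by blast
  have "integrable lborel (\<lambda>x::real^'n. B * (1 / bracket x ^ DIM(real^'n)))"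
    by (intro integrable_mult_right integrable_inverse_bracket_power_DIM)
  then show ?thesis
  proof (rule Bochner_Integration.integrable_bound)
    show "(\<lambda>x. bracket x ^ k * \<phi> x) \<in> borel_measurable lborel"
      by measurable
    show "AE x in lborel. norm (bracket x ^ k * \<phi> x) \<le> norm (B * (1 / bracket x ^ DIM(real^'n)))"
    proof (rule AE_I2)
      fix x :: "real^'n"
      have pos: "0 < bracket x ^ CARD('n)"
        using zero_less_power[OF bracket_pos] by blast
      have "bracket x ^ k * \<phi> x \<le> B / bracket x ^ CARD('n)"
        using B[of x] pos by (simp add: field_simps power_add)
      moreover have "0 \<le> bracket x ^ k * \<phi> x"
        using bracket_pos[of x] phi_nonneg[of x] by simp
      moreover have "B / bracket x ^ CARD('n) \<le> \<bar>B\<bar> / bracket x ^ CARD('n)"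
        using pos by (intro divide_right_mono) auto
      ultimately show "norm (bracket x ^ k * \<phi> x) \<le> norm (B * (1 / bracket x ^ DIM(real^'n)))"
        using pos by simp
    qed
  qed
qed

lemma integrable_phi: "integrable lborel \<phi>"
  using integrable_bracket_power_phi[of 0] by simp

lemma nn_integral_phi: "(\<integral>\<^sup>+x. ennreal (\<phi> x) \<partial>lborel) = 1"
  using nn_integral_eq_integral[OF integrable_phi] phi_nonneg integral_phi by simp

lemma integrable_phi_scaleR: "integrable lborel (\<lambda>y. \<phi> y *\<^sub>R y)"
proof (rule Bochner_Integration.integrable_bound[OF integrable_bracket_power_phi[of 1]])
  show "(\<lambda>y. \<phi> y *\<^sub>R y) \<in> borel_measurable lborel"
    by measurable
  show "AE y in lborel. norm (\<phi> y *\<^sub>R y) \<le> norm (bracket y ^ 1 * \<phi> y)"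
  proof (rule AE_I2)
    fix y :: "real^'n"
    have "\<phi> y * norm y \<le> \<phi> y * bracket y"
      using norm_le_bracket phi_nonneg by (rule mult_left_mono)
    then show "norm (\<phi> y *\<^sub>R y) \<le> norm (bracket y ^ 1 * \<phi> y)"
      using phi_nonneg[of y] bracket_pos[of y] by (simp add: mult.commute)
  qed
qed

lemma integrable_phi_bracket_shift: "integrable lborel (\<lambda>y. \<phi> y * bracket (z + y) ^ k)"
proof (rule Bochner_Integration.integrable_bound)
  show "integrable lborel (\<lambda>y. (2 * bracket z) ^ k * (bracket y ^ k * \<phi> y))"
    by (intro integrable_mult_right integrable_bracket_power_phi)
  show "(\<lambda>y. \<phi> y * bracket (z + y) ^ k) \<in> borel_measurable lborel"
    by measurable
  show "AE y in lborel. norm (\<phi> y * bracket (z + y) ^ k) \<le> norm ((2 * bracket z) ^ k * (bracket y ^ k * \<phi> y))"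
  proof (rule AE_I2)
    fix y
    have "bracket (z + y) ^ k \<le> (2 * bracket z * bracket y) ^ k"
      using bracket_add_le bracket_pos[of "z + y"] by (intro power_mono) auto
    then have "\<phi> y * bracket (z + y) ^ k \<le> (2 * bracket z) ^ k * (bracket y ^ k * \<phi> y)"
      using mult_left_mono phi_nonneg by (fastforce simp: power_mult_distrib mult_ac)
    then show "norm (\<phi> y * bracket (z + y) ^ k) \<le> norm ((2 * bracket z) ^ k * (bracket y ^ k * \<phi> y))"
      using phi_nonneg[of y] bracket_pos[of "z + y"] by simp
  qed
qed

definition sup_phi :: real where
  "sup_phi = (SUP x. \<phi> x)"

lemma phi_le_sup_phi: "\<phi> x \<le> sup_phi"
proof -
  obtain B where "\<And>x. bracket x ^ 0 * \<phi> x \<le> B"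
    using rapid_decay by blast
  then have "bdd_above (range \<phi>)"
    by (intro bdd_aboveI2[of _ _ B]) simp
  then show ?thesis
    unfolding sup_phi_def using cSUP_upper[of x UNIV \<phi>] by simp
qed

text \<open>\<open>p j\<close> is the \<open>(j + 1)\<close>-fold power; the shift avoids the dummy value \<open>conv_pow \<phi> 0 = \<phi>\<close>.\<close>
abbreviation p :: "nat \<Rightarrow> real^'n \<Rightarrow> real" where
  "p j \<equiv> conv_pow \<phi> (Suc j)"

lemma p_Suc: "p (Suc j) = conv \<phi> (p j)"
  by simp

lemma p_properties:
  "p j \<in> borel_measurable borel \<and> (\<forall>x. 0 \<le> p j x) \<and> (\<forall>x. p j x \<le> sup_phi)
    \<and> (\<integral>\<^sup>+x. ennreal (p j x) \<partial>lborel) = 1"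
proof (induction j)
  case 0
  then show ?case
    using phi_nonneg phi_le_sup_phi nn_integral_phi by simp
next
  case (Suc j)
  then have [measurable]: "p j \<in> borel_measurable borel" and nonneg: "\<And>x. 0 \<le> p j x"
    and bounded: "\<And>x. p j x \<le> sup_phi" and total: "(\<integral>\<^sup>+x. ennreal (p j x) \<partial>lborel) = 1"
    by auto
  have int: "integrable lborel (\<lambda>y. \<phi> y * p j (x - y))" for x
    using nonneg bounded by (intro integrable_mult_shift_bounded[OF integrable_phi]) auto
  have "0 \<le> p (Suc j) x" for x
    unfolding p_Suc conv_def using phi_nonneg nonneg by (intro integral_nonneg_AE) auto
  moreover have "p (Suc j) x \<le> sup_phi" for x
  proof -
    have "p (Suc j) x \<le> (\<integral>y. sup_phi * \<phi> y \<partial>lborel)"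
      unfolding p_Suc conv_def using int integrable_phi phi_nonneg bounded
      by (intro integral_mono) (auto simp: mult.commute[of sup_phi] intro: mult_left_mono)
    then show ?thesis
      using integral_phi by simp
  qed
  moreover have "(\<integral>\<^sup>+x. ennreal (p (Suc j) x) \<partial>lborel) = 1"
    using nn_integral_mult_conv[of \<phi> "p j" "\<lambda>_. 1", OF _ _ _ phi_nonneg nonneg _ int]
    by (simp add: total nn_integral_phi nn_integral_cmult)
  ultimately show ?case
    using borel_measurable_conv[of \<phi> "p j"] by simp
qed

lemma borel_measurable_p [measurable]: "p j \<in> borel_measurable borel"
  using p_properties by blast

lemma p_nonneg: "0 \<le> p j x"
  using p_properties by blast

lemma nn_integral_p: "(\<integral>\<^sup>+x. ennreal (p j x) \<partial>lborel) = 1"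
  using p_properties by blast

lemma integrable_phi_mult_p: "integrable lborel (\<lambda>y. \<phi> y * p j (x - y))"
  using p_nonneg p_properties by (intro integrable_mult_shift_bounded[OF integrable_phi]) auto

definition phi_moment :: "nat \<Rightarrow> real" where
  "phi_moment k = (\<integral>x. bracket x ^ k * \<phi> x \<partial>lborel)"

definition moment_step_const :: "nat \<Rightarrow> real" where
  "moment_step_const n = (real (Suc n) + 3 ^ Suc n) * 4 ^ Suc n * phi_moment (Suc n)"

lemma phi_moment_nonneg: "0 \<le> phi_moment k"
  unfolding phi_moment_def using phi_nonneg bracket_nonneg
  by (intro integral_nonneg_AE AE_I2 mult_nonneg_nonneg zero_le_power) auto

lemma moment_step_const_nonneg: "0 \<le> moment_step_const n"
  unfolding moment_step_const_def using phi_moment_nonneg by simp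

text \<open>Here the vanishing mean of \<open>\<phi>\<close> removes the term of \<open>bracket_add_power_le\<close> that is linear in
  \<open>y\<close>.\<close>
lemma integral_phi_bracket_shift_le:
  "(\<integral>y. \<phi> y * bracket (z + y) ^ Suc n \<partial>lborel)
    \<le> bracket z ^ Suc n + moment_step_const n * bracket z ^ n"
proof -
  define c1 where "c1 = 2 * real (Suc n) * bracket z ^ n"
  define c2 where "c2 = (real (Suc n) + 3 ^ Suc n) * 4 ^ Suc n * bracket z ^ n"
  have int: "integrable lborel (\<lambda>y. \<phi> y * bracket z ^ Suc n)"
      "integrable lborel (\<lambda>y. c1 * (z \<bullet> (\<phi> y *\<^sub>R y)))"
      "integrable lborel (\<lambda>y. c2 * (bracket y ^ Suc n * \<phi> y))"
    by (intro integrable_mult_right integrable_mult_left integrable_inner_right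
        integrable_phi integrable_phi_scaleR integrable_bracket_power_phi)+
  have "(\<integral>y. \<phi> y * bracket (z + y) ^ Suc n \<partial>lborel)
      \<le> (\<integral>y. \<phi> y * bracket z ^ Suc n + c1 * (z \<bullet> (\<phi> y *\<^sub>R y)) + c2 * (bracket y ^ Suc n * \<phi> y) \<partial>lborel)"
  proof (intro integral_mono integrable_phi_bracket_shift Bochner_Integration.integrable_add int)
    fix y
    show "\<phi> y * bracket (z + y) ^ Suc n
        \<le> \<phi> y * bracket z ^ Suc n + c1 * (z \<bullet> (\<phi> y *\<^sub>R y)) + c2 * (bracket y ^ Suc n * \<phi> y)"
      using mult_left_mono[OF bracket_add_power_le[of z y n] phi_nonneg[of y]]
      by (simp add: c1_def c2_def algebra_simps)
  qed
  also have "\<dots> = (\<integral>y. \<phi> y * bracket z ^ Suc n \<partial>lborel) + (\<integral>y. c1 * (z \<bullet> (\<phi> y *\<^sub>R y)) \<partial>lborel)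
      + (\<integral>y. c2 * (bracket y ^ Suc n * \<phi> y) \<partial>lborel)"
    using int by simp
  also have "\<dots> = bracket z ^ Suc n + moment_step_const n * bracket z ^ n"
  proof -
    have "(\<integral>y. z \<bullet> (\<phi> y *\<^sub>R y) \<partial>lborel) = 0"
      using integral_inner_right[OF integrable_phi_scaleR, of z] mean_zero by simp
    then show ?thesis
      by (simp add: integral_phi phi_moment_def moment_step_const_def c2_def)
  qed
  finally show ?thesis .
qed

definition moment :: "nat \<Rightarrow> nat \<Rightarrow> ennreal" where
  "moment j m = (\<integral>\<^sup>+x. ennreal (bracket x ^ m * p j x) \<partial>lborel)"

lemma moment_0: "moment j 0 = 1"
  by (simp add: moment_def nn_integral_p)

lemma moment_phi: "moment 0 m = ennreal (phi_moment m)"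
  unfolding moment_def phi_moment_def using integrable_bracket_power_phi phi_nonneg bracket_nonneg
  by (subst nn_integral_eq_integral) (auto intro!: AE_I2 mult_nonneg_nonneg zero_le_power)

lemma moment_Suc_le: "moment (Suc j) (Suc n) \<le> moment j (Suc n) + ennreal (moment_step_const n) * moment j n"
proof -
  let ?K = "moment_step_const n"
  have inner: "(\<integral>\<^sup>+y. ennreal (\<phi> y * bracket (z + y) ^ Suc n) \<partial>lborel)
      \<le> ennreal (bracket z ^ Suc n + ?K * bracket z ^ n)" for z
  proof -
    have "(\<integral>\<^sup>+y. ennreal (\<phi> y * bracket (z + y) ^ Suc n) \<partial>lborel)
        = ennreal (\<integral>y. \<phi> y * bracket (z + y) ^ Suc n \<partial>lborel)"
      by (rule nn_integral_eq_integral[OF integrable_phi_bracket_shift])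
        (auto intro!: AE_I2 simp: phi_nonneg bracket_nonneg)
    then show ?thesis
      using ennreal_leI[OF integral_phi_bracket_shift_le] by simp
  qed
  have "moment (Suc j) (Suc n)
      = (\<integral>\<^sup>+z. ennreal (p j z) * (\<integral>\<^sup>+y. ennreal (\<phi> y * bracket (z + y) ^ Suc n) \<partial>lborel) \<partial>lborel)"
    unfolding moment_def p_Suc
    by (rule nn_integral_mult_conv) (auto simp: phi_nonneg p_nonneg bracket_nonneg
        integrable_phi_mult_p)
  also have "\<dots> \<le> (\<integral>\<^sup>+z. ennreal (p j z) * ennreal (bracket z ^ Suc n + ?K * bracket z ^ n) \<partial>lborel)"
    by (intro nn_integral_mono mult_left_mono inner) auto
  also have "\<dots> = (\<integral>\<^sup>+z. ennreal (bracket z ^ Suc n * p j z) + ennreal ?K * ennreal (bracket z ^ n * p j z) \<partial>lborel)"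
  proof (rule nn_integral_cong)
    fix z :: "real^'n"
    have nonneg: "0 \<le> p j z" "0 \<le> ?K" "0 \<le> bracket z ^ n" "0 \<le> bracket z ^ Suc n"
      using p_nonneg moment_step_const_nonneg zero_le_power[OF bracket_nonneg] by blast+
    have "ennreal (p j z) * ennreal (bracket z ^ Suc n + ?K * bracket z ^ n)
        = ennreal (bracket z ^ Suc n * p j z + ?K * (bracket z ^ n * p j z))"
      using nonneg by (simp add: ennreal_mult[symmetric] algebra_simps del: power_Suc)
    also have "\<dots> = ennreal (bracket z ^ Suc n * p j z) + ennreal ?K * ennreal (bracket z ^ n * p j z)"
      using nonneg by (simp add: ennreal_plus ennreal_mult del: power_Suc)
    finally show "ennreal (p j z) * ennreal (bracket z ^ Suc n + ?K * bracket z ^ n)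
        = ennreal (bracket z ^ Suc n * p j z) + ennreal ?K * ennreal (bracket z ^ n * p j z)" .
  qed
  also have "\<dots> = moment j (Suc n) + ennreal ?K * moment j n"
    unfolding moment_def by (simp add: nn_integral_add nn_integral_cmult)
  finally show ?thesis .
qed

lemma moment_bound: "\<exists>C\<ge>0. \<forall>j. moment j m \<le> ennreal (C * real (Suc j) ^ m)"
proof (induction m)
  case 0
  then show ?case
    by (intro exI[of _ 1]) (simp add: moment_0)
next
  case (Suc n)
  then obtain C where C0: "0 \<le> C" and C: "\<And>j. moment j n \<le> ennreal (C * real (Suc j) ^ n)"
    by blast
  define K where "K = moment_step_const n"
  define E where "E = phi_moment (Suc n) + K * C"
  have KC: "0 \<le> K * C" "K * C \<le> E"
    using moment_step_const_nonneg phi_moment_nonneg C0 by (simp_all add: K_def E_def)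
  have "moment j (Suc n) \<le> ennreal (E * real (Suc j) ^ Suc n)" for j
  proof (induction j)
    case 0
    then show ?case
      using KC by (simp add: moment_phi E_def ennreal_leI)
  next
    case (Suc j)
    have "moment (Suc j) (Suc n) \<le> moment j (Suc n) + ennreal K * moment j n"
      unfolding K_def by (rule moment_Suc_le)
    also have "\<dots> \<le> ennreal (E * real (Suc j) ^ Suc n) + ennreal K * ennreal (C * real (Suc j) ^ n)"
      using Suc C[of j] by (intro add_mono mult_left_mono) auto
    also have "\<dots> = ennreal (E * real (Suc j) ^ Suc n) + ennreal (K * C * real (Suc j) ^ n)"
      using C0 moment_step_const_nonneg by (simp add: K_def ennreal_mult[symmetric] mult_ac)
    also have "\<dots> = ennreal (E * real (Suc j) ^ Suc n + K * C * real (Suc j) ^ n)"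
      using KC by (intro ennreal_plus[symmetric]) auto
    also have "\<dots> \<le> ennreal (E * real (Suc (Suc j)) ^ Suc n)"
      using power_Suc_plus_one_le[of "real (Suc j)" "K * C" E n] KC
      by (intro ennreal_leI) (simp add: add.commute del: power_Suc)
    finally show ?case .
  qed
  then show ?case
    using KC by (intro exI[of _ E]) auto
qed

lemma phi_mult_norm_power_le:
  assumes B: "\<And>w. bracket w ^ m * \<phi> w \<le> B"
  shows "\<phi> w * norm x ^ (2 * m) \<le> B * 4 ^ m * bracket (x - w) ^ m"
proof -
  have "1 * \<phi> w \<le> bracket w ^ m * \<phi> w"
    by (intro mult_right_mono one_le_power bracket_ge_1 phi_nonneg)
  then have phi_B: "\<phi> w \<le> B"
    using B[of w] by simp
  have one_le: "1 \<le> bracket (x - w) ^ m"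
    by (intro one_le_power bracket_ge_1)
  consider "norm x / 2 \<le> norm (x - w)" | "norm x / 2 \<le> norm w"
    using norm_triangle_ineq[of "x - w" w] by fastforce
  then show ?thesis
  proof cases
    case 1
    then have "norm x ^ (2 * m) \<le> 4 ^ m * bracket (x - w) ^ m"
      by (rule power_le_bracket_power) simp
    with phi_B show ?thesis
      using phi_nonneg[of w] by (fastforce simp: mult_ac intro: mult_mono)
  next
    case 2
    then have "norm x ^ (2 * m) \<le> 4 ^ m * bracket w ^ m"
      by (rule power_le_bracket_power) simp
    then have "\<phi> w * norm x ^ (2 * m) \<le> 4 ^ m * (bracket w ^ m * \<phi> w)"
      using mult_left_mono[OF _ phi_nonneg] by (fastforce simp: mult_ac)
    also have "\<dots> \<le> 4 ^ m * B"
      using B by simp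
    also have "\<dots> \<le> B * 4 ^ m * bracket (x - w) ^ m"
      using mult_left_mono[OF one_le, of "B * 4 ^ m"] phi_B phi_nonneg[of w] by (simp add: mult_ac)
    finally show ?thesis .
  qed
qed

text \<open>In \<open>p (Suc i) x = (\<phi> \<star> p i)(x)\<close> the factor \<open>|x|^{2m}\<close> is absorbed by \<open>\<phi>(y) \<langle>x - y\<rangle>^{2m}\<close>,
  leaving the moment of \<open>p i\<close> of order \<open>m\<close>.\<close>
lemma p_Suc_mult_norm_power_le:
  assumes B: "\<And>w. bracket w ^ m * \<phi> w \<le> B" and B0: "0 \<le> B"
  shows "ennreal (p (Suc i) x * norm x ^ (2 * m)) \<le> ennreal (B * 4 ^ m) * moment i m"
proof -
  define r where "r = norm x ^ (2 * m)"
  have r0: "0 \<le> r"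
    by (simp add: r_def)
  have "ennreal (p (Suc i) x * r) = ennreal (conv \<phi> (p i) x) * ennreal r"
    using r0 p_nonneg[of "Suc i" x] by (simp add: ennreal_mult)
  also have "\<dots> = (\<integral>\<^sup>+y. ennreal (\<phi> y * p i (x - y)) \<partial>lborel) * ennreal r"
    by (simp only: ennreal_conv[OF integrable_phi_mult_p phi_nonneg p_nonneg])
  also have "\<dots> = (\<integral>\<^sup>+y. ennreal (\<phi> y * p i (x - y)) * ennreal r \<partial>lborel)"
    by (rule nn_integral_multc[symmetric]) measurable
  also have "\<dots> = (\<integral>\<^sup>+y. ennreal (\<phi> y * r * p i (x - y)) \<partial>lborel)"
    using r0 phi_nonneg p_nonneg by (simp add: ennreal_mult[symmetric] mult_ac)
  also have "\<dots> \<le> (\<integral>\<^sup>+y. ennreal (B * 4 ^ m) * ennreal (bracket (x - y) ^ m * p i (x - y)) \<partial>lborel)"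
  proof (rule nn_integral_mono)
    fix y
    have "\<phi> y * r * p i (x - y) \<le> B * 4 ^ m * bracket (x - y) ^ m * p i (x - y)"
      using phi_mult_norm_power_le[OF B, of y x] p_nonneg unfolding r_def by (rule mult_right_mono)
    then show "ennreal (\<phi> y * r * p i (x - y))
        \<le> ennreal (B * 4 ^ m) * ennreal (bracket (x - y) ^ m * p i (x - y))"
      using B0 p_nonneg[of i "x - y"] bracket_nonneg[of "x - y"]
      by (subst ennreal_mult[symmetric]) (auto intro: ennreal_leI simp: mult_ac)
  qed
  also have "\<dots> = ennreal (B * 4 ^ m) * moment i m"
    unfolding moment_def
    by (simp add: nn_integral_cmult nn_integral_lborel_reflect[of "\<lambda>v. ennreal (bracket v ^ m * p i v)"])
  finally show ?thesis
    by (simp add: r_def)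
qed

lemma p_decay: "\<exists>D\<ge>0. \<forall>j x. p j x * norm x ^ (2 * m) \<le> D * real (Suc j) ^ m"
proof -
  obtain B where B: "\<And>w. bracket w ^ m * \<phi> w \<le> B"
    using rapid_decay by blast
  have "0 \<le> bracket (0::real^'n) ^ m * \<phi> 0"
    by (intro mult_nonneg_nonneg zero_le_power bracket_nonneg phi_nonneg)
  then have B0: "0 \<le> B"
    using B[of 0] by linarith
  obtain C where C0: "0 \<le> C" and C: "\<And>j. moment j m \<le> ennreal (C * real (Suc j) ^ m)"
    using moment_bound by blast
  have "p j x * norm x ^ (2 * m) \<le> B * 4 ^ m * ((1 + C) * real (Suc j) ^ m)" for j x
  proof (cases j)
    case 0
    have "p j x * norm x ^ (2 * m) \<le> B * 4 ^ m * 1"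
      using phi_mult_norm_power_le[OF B, of x x] by (simp add: 0 bracket_def)
    also have "\<dots> \<le> B * 4 ^ m * ((1 + C) * real (Suc j) ^ m)"
      using B0 C0 by (intro mult_left_mono) (auto simp: 0)
    finally show ?thesis .
  next
    case (Suc i)
    have "ennreal (p j x * norm x ^ (2 * m)) \<le> ennreal (B * 4 ^ m) * ennreal (C * real (Suc i) ^ m)"
      using order_trans[OF p_Suc_mult_norm_power_le[OF B B0] mult_left_mono[OF C]] by (simp add: Suc)
    then have "p j x * norm x ^ (2 * m) \<le> B * 4 ^ m * (C * real (Suc i) ^ m)"
      using B0 C0 by (simp add: ennreal_mult[symmetric] ennreal_le_iff)
    also have "\<dots> \<le> B * 4 ^ m * ((1 + C) * real (Suc j) ^ m)"
      using B0 C0 by (intro mult_left_mono mult_mono power_mono) (auto simp: Suc)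
    finally show ?thesis .
  qed
  then show ?thesis
    using B0 C0 by (intro exI[of _ "B * 4 ^ m * (1 + C)"]) (auto simp: mult_ac)
qed

end

lemma schwartz_centered_density:
  fixes \<phi> :: "real^'n \<Rightarrow> real"
  assumes "schwartz \<phi>" "\<And>x. \<phi> x \<ge> 0" "integral\<^sup>L lborel \<phi> = 1"
    "(\<integral>x. \<phi> x *\<^sub>R x \<partial>lborel) = 0"
  shows "centered_density \<phi>"
proof
  obtain D :: "'n list \<Rightarrow> real^'n \<Rightarrow> real" where D0: "D [] = \<phi>"
    and Dd: "\<And>\<beta> x. (D \<beta> has_derivative (\<lambda>h. \<Sum>i\<in>UNIV. h $ i * D (i # \<beta>) x)) (at x)"
    and Db: "\<And>\<beta> (k::nat). \<exists>B. \<forall>x. (1 + norm x) ^ k * \<bar>D \<beta> x\<bar> \<le> B"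
    using assms(1) unfolding schwartz_def by blast
  have "continuous_on UNIV \<phi>"
    using has_derivative_continuous[OF Dd[of "[]"]] D0 by (intro continuous_at_imp_continuous_on) auto
  then show "\<phi> \<in> borel_measurable borel"
    by (rule borel_measurable_continuous_onI)
  show "\<exists>B. \<forall>x. bracket x ^ k * \<phi> x \<le> B" for k
  proof -
    obtain B where B: "\<And>x. (1 + norm x) ^ (2 * k) * \<bar>D [] x\<bar> \<le> B"
      using Db by blast
    have "bracket x ^ k * \<phi> x \<le> B" for x
    proof -
      have "bracket x \<le> (1 + norm x) ^ 2"
        by (simp add: bracket_def power2_eq_square algebra_simps)
      then have "bracket x ^ k \<le> ((1 + norm x) ^ 2) ^ k"
        using bracket_nonneg by (rule power_mono)
      then have "bracket x ^ k \<le> (1 + norm x) ^ (2 * k)"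
        by (simp add: power_mult)
      then show ?thesis
        using mult_right_mono[OF _ assms(2)[of x]] B[of x] D0 assms(2)[of x] by fastforce
    qed
    then show ?thesis
      by blast
  qed
qed (use assms in auto)

section \<open>Lattice sums\<close>

lemma summable_on_inverse_one_plus_square_int:
  "(\<lambda>t::int. 1 / (1 + real_of_int t ^ 2)) summable_on UNIV"
proof -
  define g where "g t = 1 / (1 + real_of_int t ^ 2)" for t :: int
  have "summable (\<lambda>n::nat. 1 / (1 + real n ^ 2))"
  proof (rule summable_comparison_test'[OF inverse_power_summable[of 2, where 'a=real]])
    fix n :: nat
    assume "1 \<le> n"
    then show "norm (1 / (1 + real n ^ 2)) \<le> inverse (real n ^ 2)"
      by (simp add: divide_simps add_pos_nonneg)
  qed simp
  then have nat: "(\<lambda>n::nat. 1 / (1 + real n ^ 2)) summable_on UNIV"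
    by (subst summable_on_UNIV_nonneg_real_iff) auto
  have "g summable_on (int ` UNIV)"
    by (subst summable_on_reindex) (use nat in \<open>auto simp: g_def o_def\<close>)
  moreover have "g summable_on ((\<lambda>n. - int n) ` UNIV)"
    by (subst summable_on_reindex) (use nat in \<open>auto simp: g_def o_def inj_on_def\<close>)
  ultimately have "g summable_on (int ` UNIV \<union> (\<lambda>n. - int n) ` UNIV)"
    by (rule summable_on_union)
  moreover have "t \<in> int ` UNIV \<union> (\<lambda>n. - int n) ` UNIV" for t :: int
  proof (cases "0 \<le> t")
    case True
    then have "t = int (nat t)"
      by simp
    then show ?thesis
      by blast
  next
    case False
    then have "t = - int (nat (- t))"
      by simp
    then show ?thesis
      by blast
  qed
  then have "int ` UNIV \<union> (\<lambda>n. - int n) ` UNIV = UNIV"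
    by blast
  ultimately have "g summable_on UNIV"
    by simp
  then show ?thesis
    by (simp add: g_def[abs_def])
qed

lemma summable_on_inverse_one_plus_square_power_int:
  assumes "1 \<le> q"
  shows "(\<lambda>t::int. 1 / (1 + real_of_int t ^ 2) ^ q) summable_on UNIV"
proof (rule summable_on_comparison_test[OF summable_on_inverse_one_plus_square_int])
  fix t :: int
  have "1 + real_of_int t ^ 2 \<le> (1 + real_of_int t ^ 2) ^ q"
    using power_increasing[of 1 q "1 + real_of_int t ^ 2"] assms by simp
  then show "1 / (1 + real_of_int t ^ 2) ^ q \<le> 1 / (1 + real_of_int t ^ 2)"
    by (intro divide_left_mono) (auto simp: add_pos_nonneg)
qed simp

definition lattice_weight :: "nat \<Rightarrow> ('n::finite \<Rightarrow> int) \<Rightarrow> real" where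
  "lattice_weight q k = (\<Prod>i\<in>UNIV. 1 / (1 + real_of_int (k i) ^ 2) ^ q)"

lemma lattice_weight_nonneg: "0 \<le> lattice_weight q k"
  unfolding lattice_weight_def by (intro prod_nonneg) simp

text \<open>\<open>infsum_prod_PiE_abs\<close> evaluates the infinite sum without presupposing summability, and a
  nonzero value of \<open>infsum\<close> forces summability.\<close>
lemma lattice_weight_summable:
  assumes "1 \<le> q"
  shows "lattice_weight q summable_on (UNIV :: ('n::finite \<Rightarrow> int) set)"
proof -
  define h where "h t = 1 / (1 + real_of_int t ^ 2) ^ q" for t :: int
  have h_nonneg: "0 \<le> h t" for t
    by (simp add: h_def)
  have h: "h summable_on UNIV"
    unfolding h_def[abs_def] using assms by (rule summable_on_inverse_one_plus_square_power_int)
  have "lattice_weight q = (\<lambda>k :: 'n \<Rightarrow> int. \<Prod>i\<in>UNIV. h (k i))"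
    by (simp add: lattice_weight_def h_def fun_eq_iff)
  moreover have "(\<lambda>t. norm (h t)) summable_on UNIV"
    using h h_nonneg by simp
  ultimately have "infsum (lattice_weight q) (UNIV :: ('n \<Rightarrow> int) set) = infsum h UNIV ^ CARD('n)"
    using infsum_prod_PiE_abs[of "UNIV :: 'n set" "\<lambda>i. h" "\<lambda>_. UNIV"] by simp
  moreover have "0 < infsum h UNIV"
  proof -
    have "h summable_on - {0}"
      using h by (rule summable_on_subset) auto
    moreover have "insert 0 (- {0}) = (UNIV :: int set)"
      by auto
    ultimately have "infsum h UNIV = h 0 + infsum h (- {0})"
      using infsum_insert[of h "- {0}" 0] by simp
    moreover have "0 \<le> infsum h (- {0})"
      by (intro infsum_nonneg h_nonneg)
    ultimately show ?thesis
      by (simp add: h_def)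
  qed
  ultimately have "infsum (lattice_weight q) (UNIV :: ('n \<Rightarrow> int) set) \<noteq> 0"
    by simp
  then show ?thesis
    using infsum_not_exists by blast
qed

lemma lattice_pt_eq_0_iff: "lattice_pt k = 0 \<longleftrightarrow> k = (\<lambda>_. 0)"
  by (auto simp: lattice_pt_def vec_eq_iff fun_eq_iff)

lemma lattice_weight_le:
  fixes k :: "'n::finite \<Rightarrow> int"
  assumes "k \<noteq> (\<lambda>_. 0)"
  shows "1 \<le> 2 ^ (CARD('n) * q) * norm (lattice_pt k) ^ (2 * (CARD('n) * q)) * lattice_weight q k"
proof -
  define N where "N = norm (lattice_pt k) ^ 2"
  have comp: "real_of_int (k i) ^ 2 \<le> N" for i
    using power_mono[OF component_le_norm_cart[of "lattice_pt k" i] abs_ge_zero, of 2]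
    by (simp add: N_def lattice_pt_def)
  obtain i where "k i \<noteq> 0"
    using assms by auto
  then have "1 \<le> \<bar>real_of_int (k i)\<bar>"
    by linarith
  then have "1 \<le> real_of_int (k i) ^ 2"
    using power_mono[of 1 "\<bar>real_of_int (k i)\<bar>" 2] by simp
  then have N1: "1 \<le> N"
    using comp[of i] by linarith
  define Pr where "Pr = (\<Prod>i\<in>(UNIV::'n set). (1 + real_of_int (k i) ^ 2) ^ q)"
  have Pr_pos: "0 < Pr"
    unfolding Pr_def by (intro prod_pos) (auto simp: add_pos_nonneg)
  have "lattice_weight q k = 1 / Pr"
    unfolding lattice_weight_def Pr_def by (simp add: prod_dividef)
  moreover have "Pr \<le> 2 ^ (CARD('n) * q) * norm (lattice_pt k) ^ (2 * (CARD('n) * q))"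
  proof -
    have "Pr \<le> (\<Prod>i\<in>(UNIV::'n set). (1 + N) ^ q)"
      unfolding Pr_def by (intro prod_mono conjI power_mono) (auto simp: comp)
    also have "\<dots> = (1 + N) ^ (CARD('n) * q)"
      by (simp add: power_mult mult.commute)
    also have "\<dots> \<le> (2 * N) ^ (CARD('n) * q)"
      using N1 by (intro power_mono) auto
    also have "\<dots> = 2 ^ (CARD('n) * q) * norm (lattice_pt k) ^ (2 * (CARD('n) * q))"
      by (simp add: N_def power_mult_distrib power_mult)
    finally show ?thesis .
  qed
  ultimately show ?thesis
    using Pr_pos by simp
qed

lemma decay_le_lattice_weight:
  fixes f :: "real^'n \<Rightarrow> real"
  assumes nonneg: "\<And>x. 0 \<le> f x"
    and decay: "\<And>x. x \<noteq> 0 \<Longrightarrow> f x * norm x ^ (2 * (CARD('n) * q)) \<le> A"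
    and L: "0 < L" and k: "k \<noteq> (\<lambda>_. 0)"
  shows "f (L *\<^sub>R lattice_pt k) \<le> A * 2 ^ (CARD('n) * q) / L ^ (2 * (CARD('n) * q)) * lattice_weight q k"
proof -
  define m where "m = CARD('n) * q"
  define x where "x = L *\<^sub>R lattice_pt k"
  have "x \<noteq> 0"
    using k L by (simp add: x_def lattice_pt_eq_0_iff)
  then have bound: "f x * L ^ (2 * m) * norm (lattice_pt k) ^ (2 * m) \<le> A"
    using decay[of x] L by (simp add: m_def x_def power_mult_distrib mult_ac)
  have "f x \<le> f x * (2 ^ m * norm (lattice_pt k) ^ (2 * m) * lattice_weight q k)"
    using mult_left_mono[OF lattice_weight_le[OF k, of q] nonneg[of x]] by (simp add: m_def)
  also have "\<dots> = (f x * L ^ (2 * m) * norm (lattice_pt k) ^ (2 * m)) * (2 ^ m * lattice_weight q k) / L ^ (2 * m)"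
    using L by (simp add: field_simps)
  also have "\<dots> \<le> A * (2 ^ m * lattice_weight q k) / L ^ (2 * m)"
    using bound L lattice_weight_nonneg[of q k] by (intro divide_right_mono mult_right_mono) auto
  finally show ?thesis
    by (simp add: x_def m_def)
qed

lemma lattice_tail_le:
  fixes f :: "real^'n \<Rightarrow> real"
  assumes nonneg: "\<And>x. 0 \<le> f x"
    and decay: "\<And>x. x \<noteq> 0 \<Longrightarrow> f x * norm x ^ (2 * (CARD('n) * q)) \<le> A"
    and L: "0 < L" and q: "1 \<le> q"
  shows "(\<lambda>k. f (L *\<^sub>R lattice_pt k)) summable_on - {\<lambda>_. 0}"
    and "(\<Sum>\<^sub>\<infinity>k\<in>- {\<lambda>_. 0}. f (L *\<^sub>R lattice_pt k))
      \<le> A * 2 ^ (CARD('n) * q) / L ^ (2 * (CARD('n) * q)) * infsum (lattice_weight q) (UNIV :: ('n \<Rightarrow> int) set)"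
proof -
  define c where "c = A * 2 ^ (CARD('n) * q) / L ^ (2 * (CARD('n) * q))"
  have le: "f (L *\<^sub>R lattice_pt k) \<le> c * lattice_weight q k" if "k \<noteq> (\<lambda>_. 0)" for k
    unfolding c_def using nonneg decay L that by (rule decay_le_lattice_weight)
  have "0 \<le> A"
    using order_trans[OF mult_nonneg_nonneg[OF nonneg zero_le_power[OF norm_ge_zero]] decay[of "vec 1"]]
    by (simp add: vec_eq_iff)
  then have c0: "0 \<le> c"
    using L by (simp add: c_def)
  have weight_summable: "(\<lambda>k. c * lattice_weight q k) summable_on (UNIV :: ('n \<Rightarrow> int) set)"
    using lattice_weight_summable[OF q] by (rule summable_on_cmult_right)
  then show tail_summable: "(\<lambda>k. f (L *\<^sub>R lattice_pt k)) summable_on - {\<lambda>_. 0}"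
    by (rule summable_on_comparison_test[OF summable_on_subset]) (auto simp: le nonneg)
  have "(\<Sum>\<^sub>\<infinity>k\<in>- {\<lambda>_. 0}. f (L *\<^sub>R lattice_pt k))
      \<le> infsum (\<lambda>k. c * lattice_weight q k) (UNIV :: ('n \<Rightarrow> int) set)"
    by (rule infsum_mono_neutral[OF tail_summable weight_summable]) (auto simp: le c0 lattice_weight_nonneg)
  also have "\<dots> = c * infsum (lattice_weight q) (UNIV :: ('n \<Rightarrow> int) set)"
    by (rule infsum_cmult_right')
  finally show "(\<Sum>\<^sub>\<infinity>k\<in>- {\<lambda>_. 0}. f (L *\<^sub>R lattice_pt k))
      \<le> c * infsum (lattice_weight q) (UNIV :: ('n \<Rightarrow> int) set)" .
qed

section \<open>The error term\<close>

lemma power_ratio_le_powr: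
  fixes L \<epsilon> :: real and j d m :: nat
  assumes L: "1 \<le> L" and j: "real j \<le> L powr (2 - \<epsilon>)" and m: "real d + 2 \<le> \<epsilon> * real m"
  shows "real j ^ m * L ^ d / L ^ (2 * m) \<le> L powr -2"
proof -
  have L0: "0 < L"
    using L by simp
  have "real j ^ m \<le> L powr ((2 - \<epsilon>) * real m)"
    using power_mono[OF j] L0 by (simp add: powr_realpow[symmetric] powr_powr)
  then have "real j ^ m * L ^ d / L ^ (2 * m) \<le> L powr ((2 - \<epsilon>) * real m) * L ^ d / L ^ (2 * m)"
    using L0 by (intro divide_right_mono mult_right_mono) auto
  also have "\<dots> = L powr ((2 - \<epsilon>) * real m + real d - real (2 * m))"
    using L0 by (simp add: powr_add powr_diff powr_realpow[symmetric] del: of_nat_mult)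
  also have "\<dots> \<le> L powr -2"
    using m L by (intro powr_mono) (auto simp: algebra_simps)
  finally show ?thesis .
qed

lemma exists_exponent:
  fixes \<epsilon> :: real
  assumes \<epsilon>: "0 < \<epsilon>" and d: "0 < d"
  shows "\<exists>q\<ge>1. real d + 2 \<le> \<epsilon> * real (d * q)"
proof (intro exI conjI)
  define q where "q = nat \<lceil>(real d + 2) / \<epsilon>\<rceil> + 1"
  show "1 \<le> q"
    by (simp add: q_def)
  have "(real d + 2) / \<epsilon> \<le> real q"
    unfolding q_def by linarith
  then have "real d + 2 \<le> \<epsilon> * real q"
    using \<epsilon> by (simp add: field_simps)
  also have "\<dots> \<le> \<epsilon> * real (d * q)"
  proof -
    have "q \<le> d * q"
      using mult_le_mono1[of 1 d q] d by simp
    then show ?thesis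
      using mult_left_mono[OF of_nat_mono less_imp_le[OF \<epsilon>]] by blast
  qed
  finally show "real d + 2 \<le> \<epsilon> * real (d * q)" .
qed

context centered_density
begin

lemma W_Suc_error_le:
  assumes \<theta>: "0 \<le> \<theta>" and q: "1 \<le> q" and L: "0 < L"
    and decay: "\<And>x. x \<noteq> 0 \<Longrightarrow> p i x * norm x ^ (2 * (CARD('n) * q)) \<le> A"
  shows "\<bar>W \<theta> \<phi> L (Suc i) - \<theta> * L ^ CARD('n) * p i 0\<bar>
    \<le> \<theta> * L ^ CARD('n) * (A * 2 ^ (CARD('n) * q) / L ^ (2 * (CARD('n) * q))
      * infsum (lattice_weight q) (UNIV :: ('n \<Rightarrow> int) set))"
proof -
  define f where "f k = p i (L *\<^sub>R lattice_pt k)" for k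
  have tail_summable: "f summable_on - {\<lambda>_. 0}"
    and tail: "infsum f (- {\<lambda>_. 0})
      \<le> A * 2 ^ (CARD('n) * q) / L ^ (2 * (CARD('n) * q)) * infsum (lattice_weight q) (UNIV :: ('n \<Rightarrow> int) set)"
    using lattice_tail_le[where f="p i", OF p_nonneg decay L q] unfolding f_def[abs_def] by auto
  have "insert (\<lambda>_. 0) (- {\<lambda>_. 0}) = (UNIV :: ('n \<Rightarrow> int) set)"
    by auto
  moreover have "lattice_pt (\<lambda>_::'n. 0) = 0"
    by (simp add: lattice_pt_def vec_eq_iff)
  ultimately have "W \<theta> \<phi> L (Suc i) = \<theta> * L ^ CARD('n) * (p i 0 + infsum f (- {\<lambda>_. 0}))"
    using infsum_insert[OF tail_summable, of "\<lambda>_. 0"] unfolding W_def f_def[abs_def] by simp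
  moreover have "0 \<le> infsum f (- {\<lambda>_. 0})"
    unfolding f_def by (intro infsum_nonneg p_nonneg)
  ultimately have "\<bar>W \<theta> \<phi> L (Suc i) - \<theta> * L ^ CARD('n) * p i 0\<bar> = \<theta> * L ^ CARD('n) * infsum f (- {\<lambda>_. 0})"
    using \<theta> L by (simp add: algebra_simps)
  also have "\<dots> \<le> \<theta> * L ^ CARD('n) * (A * 2 ^ (CARD('n) * q) / L ^ (2 * (CARD('n) * q))
      * infsum (lattice_weight q) (UNIV :: ('n \<Rightarrow> int) set))"
    using tail \<theta> L by (intro mult_left_mono) auto
  finally show ?thesis .
qed

lemma W_error_le:
  assumes \<theta>: "0 \<le> \<theta>" and q: "1 \<le> q"
  shows "\<exists>K\<ge>0. \<forall>L j. 0 < L \<longrightarrow> 1 \<le> j \<longrightarrow>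
    \<bar>W \<theta> \<phi> L j - \<theta> * L ^ CARD('n) * conv_pow \<phi> j 0\<bar>
      \<le> K * (real j ^ (CARD('n) * q) * L ^ CARD('n) / L ^ (2 * (CARD('n) * q)))"
proof -
  define m where "m = CARD('n) * q"
  obtain D where D0: "0 \<le> D" and D: "\<And>j x. p j x * norm x ^ (2 * m) \<le> D * real (Suc j) ^ m"
    using p_decay by blast
  define S where "S = infsum (lattice_weight q) (UNIV :: ('n \<Rightarrow> int) set)"
  have S0: "0 \<le> S"
    unfolding S_def by (intro infsum_nonneg lattice_weight_nonneg)
  have "\<bar>W \<theta> \<phi> L (Suc i) - \<theta> * L ^ CARD('n) * p i 0\<bar>
      \<le> \<theta> * D * 2 ^ m * S * (real (Suc i) ^ m * L ^ CARD('n) / L ^ (2 * m))" if L: "0 < L" for L i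
    using W_Suc_error_le[OF \<theta> q L, of i "D * real (Suc i) ^ m"] D
    by (simp add: m_def S_def field_simps)
  then have "\<bar>W \<theta> \<phi> L j - \<theta> * L ^ CARD('n) * conv_pow \<phi> j 0\<bar>
      \<le> \<theta> * D * 2 ^ m * S * (real j ^ m * L ^ CARD('n) / L ^ (2 * m))" if "0 < L" "1 \<le> j" for L j
    using that by (cases j) auto
  moreover have "0 \<le> \<theta> * D * 2 ^ m * S"
    using \<theta> D0 S0 by simp
  ultimately show ?thesis
    unfolding m_def by blast
qed

lemma W_error_le_powr:
  assumes "0 \<le> \<theta>" "0 < \<epsilon>"
  shows "\<exists>C>0. \<forall>L j. 1 \<le> L \<and> 1 \<le> j \<and> real j \<le> L powr (2 - \<epsilon>) \<longrightarrow>
    \<bar>W \<theta> \<phi> L j - \<theta> * L ^ CARD('n) * conv_pow \<phi> j 0\<bar> \<le> C * L powr -2"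
proof -
  define d where "d = CARD('n)"
  obtain q where q: "1 \<le> q" "real d + 2 \<le> \<epsilon> * real (d * q)"
    using exists_exponent[OF assms(2), of d] by (auto simp: d_def)
  obtain K where K: "0 \<le> K" "\<And>L j. 0 < L \<Longrightarrow> 1 \<le> j \<Longrightarrow>
      \<bar>W \<theta> \<phi> L j - \<theta> * L ^ d * conv_pow \<phi> j 0\<bar> \<le> K * (real j ^ (d * q) * L ^ d / L ^ (2 * (d * q)))"
    using W_error_le[OF assms(1) q(1)] unfolding d_def by auto
  have "\<bar>W \<theta> \<phi> L j - \<theta> * L ^ d * conv_pow \<phi> j 0\<bar> \<le> (K + 1) * L powr -2"
    if L: "1 \<le> L" and j: "1 \<le> j" "real j \<le> L powr (2 - \<epsilon>)" for L j
  proof -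
    have "\<bar>W \<theta> \<phi> L j - \<theta> * L ^ d * conv_pow \<phi> j 0\<bar> \<le> K * (real j ^ (d * q) * L ^ d / L ^ (2 * (d * q)))"
      using K(2) L j by simp
    also have "\<dots> \<le> K * L powr -2"
      using power_ratio_le_powr[OF L j(2) q(2)] K(1) by (rule mult_left_mono)
    also have "\<dots> \<le> (K + 1) * L powr -2"
      by (intro mult_right_mono) auto
    finally show ?thesis .
  qed
  then show ?thesis
    using K(1) unfolding d_def by (intro exI[of _ "K + 1"]) auto
qed

end

theorem mainTheorem7:
  fixes \<phi> :: "real^'n \<Rightarrow> real" and \<theta> :: real
  assumes "\<theta> > 0"
    and "schwartz \<phi>"
    and "\<And>x. \<phi> x \<ge> 0"
    and "integral\<^sup>L lborel \<phi> = 1"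
    and "(\<integral>x. \<phi> x *\<^sub>R x \<partial>lborel) = 0"
  shows "\<forall>\<epsilon>>0. \<exists>C>0. \<forall>(L::real) (j::nat). L \<ge> 1 \<and> 1 \<le> j \<and> real j \<le> L powr (2 - \<epsilon>) \<longrightarrow>
           \<bar>W \<theta> \<phi> L j - \<theta> * L ^ CARD('n) * conv_pow \<phi> j 0\<bar> \<le> C * L powr (-2)"
proof (intro allI impI)
  fix \<epsilon> :: real
  assume "\<epsilon> > 0"
  interpret centered_density \<phi>
    using assms(2-5) by (rule schwartz_centered_density)
  show "\<exists>C>0. \<forall>(L::real) (j::nat). L \<ge> 1 \<and> 1 \<le> j \<and> real j \<le> L powr (2 - \<epsilon>) \<longrightarrow>
      \<bar>W \<theta> \<phi> L j - \<theta> * L ^ CARD('n) * conv_pow \<phi> j 0\<bar> \<le> C * L powr (-2)"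
    using assms(1) \<open>\<epsilon> > 0\<close> by (intro W_error_le_powr) auto
qed

end
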